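(* Let $X=\mathbb{R}/\mathbb{Z}$ with its standard metric, $\mu_1=\mu_2$ Lebesgue measure, $(X,T_1,\mu_1)$ exponentially mixing for $BV$ against $L^\infty$, and $T_2(x)=x+\alpha\bmod 1$. Suppose that for some $\varepsilon>0$ and some constant $c(\alpha)>0$, \[ |q\alpha-p|\ge c(\alpha)\,\frac{(\log q)^2(\log\log q)^{1+\varepsilon}}{q^2} \] for all $p\in\mathbb{Z}$ and all sufficiently large $q\in\mathbb{N}$. Let $(r_n)_n$ be a decreasing sequence of positive numbers such that for some $0<\delta<\varepsilon$ and some $c_0>0$, $r_n\ge c_0\frac{(\log n)^2(\log\log n)^{1+\delta}}{n^2}$ for all large $n$. Then $(\mu_1\times\mu_2)(\liminf_n E_{n,r_n}^{T_1,T_2})=1$.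
   Context: $(X,T,\mu)$ is exponentially mixing for $BV$ against $L^\infty$ if there are $C,\theta>0$ such that for all $\psi$ of bounded variation, all $\varphi\in L^\infty(\mu)$ and all $n\ge0$, $\bigl|\int\psi\cdot\varphi\circ T^n\,d\mu-\int\psi\,d\mu\int\varphi\,d\mu\bigr|\le C\|\psi\|_{BV}\|\varphi\|_{L^\infty}e^{-\theta n}$. For $n\in\mathbb{N}$ and $r>0$, $E_{n,r}^{T_1,T_2}:=\{(x,y)\in X\times X : d(T_1^i x, T_2^j y)<r \text{ for some } 0\le i,j<n\}$; $E_{n,r_n}^{T_1,T_2}$ denotes this set with $r=r_n$. *)

theory Defs
  imports "HOL-Analysis.Analysis" "HOL-Probability.Probability"
begin

text \<open>The circle X = R/Z is represented by the fundamental domain [0,1).\<close>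

definition circle :: "real set" where
  "circle = {0..<1}"

definition circle_measure :: "real measure" where
  "circle_measure = restrict_space lborel circle"

definition measure_preserving_map :: "'a measure \<Rightarrow> ('a \<Rightarrow> 'a) \<Rightarrow> bool" where
  "measure_preserving_map M T \<longleftrightarrow> T \<in> measurable M M \<and> distr M M T = M"

definition circ_dist :: "real \<Rightarrow> real \<Rightarrow> real" where
  "circ_dist x y = \<bar>(x - y) - of_int (round (x - y))\<bar>"

definition rotation :: "real \<Rightarrow> real \<Rightarrow> real" where
  "rotation \<alpha> x = frac (x + \<alpha>)"

text \<open>Total variation of a function on the circle: supremum over cyclically
  ordered finite partitions 0 <= x_0 < ... < x_{n-1} < 1.\<close>
definition circ_variation :: "(real \<Rightarrow> real) \<Rightarrow> ereal" where
  "circ_variation f =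
     (SUP p \<in> {(n, x). (n::nat) \<ge> 1 \<and> (\<forall>i<n. x i \<in> circle) \<and>
                       (\<forall>i j. i < j \<and> j < n \<longrightarrow> (x::nat\<Rightarrow>real) i < x j)}.
        ereal (\<Sum>i<fst p. \<bar>f (snd p (Suc i mod fst p)) - f (snd p i)\<bar>))"

definition bounded_variation :: "(real \<Rightarrow> real) \<Rightarrow> bool" where
  "bounded_variation f \<longleftrightarrow> circ_variation f < \<infinity>"

definition bv_norm :: "(real \<Rightarrow> real) \<Rightarrow> real" where
  "bv_norm f = (SUP x \<in> circle. \<bar>f x\<bar>) + real_of_ereal (circ_variation f)"

definition Linf :: "'a measure \<Rightarrow> ('a \<Rightarrow> real) \<Rightarrow> bool" where
  "Linf M f \<longleftrightarrow> f \<in> borel_measurable M \<and> esssup M (\<lambda>x. ereal \<bar>f x\<bar>) < \<infinity>"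

definition Linf_norm :: "'a measure \<Rightarrow> ('a \<Rightarrow> real) \<Rightarrow> real" where
  "Linf_norm M f = real_of_ereal (esssup M (\<lambda>x. ereal \<bar>f x\<bar>))"

definition exp_mixing_BV_Linf :: "(real \<Rightarrow> real) \<Rightarrow> bool" where
  "exp_mixing_BV_Linf T \<longleftrightarrow>
     (\<exists>C \<theta>. C > 0 \<and> \<theta> > 0 \<and>
        (\<forall>\<psi> \<phi> (n::nat). \<psi> \<in> borel_measurable circle_measure \<and> bounded_variation \<psi>
            \<and> Linf circle_measure \<phi> \<longrightarrow>
          \<bar>(\<integral>x. \<psi> x * \<phi> ((T ^^ n) x) \<partial>circle_measure)
            - (\<integral>x. \<psi> x \<partial>circle_measure) * (\<integral>x. \<phi> x \<partial>circle_measure)\<bar>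
          \<le> C * bv_norm \<psi> * Linf_norm circle_measure \<phi> * exp (- \<theta> * real n)))"

definition E_set :: "(real \<Rightarrow> real) \<Rightarrow> (real \<Rightarrow> real) \<Rightarrow> nat \<Rightarrow> real \<Rightarrow> (real \<times> real) set" where
  "E_set T1 T2 n r = {(x, y) \<in> circle \<times> circle.
      \<exists>i<n. \<exists>j<n. circ_dist ((T1 ^^ i) x) ((T2 ^^ j) y) < r}"

end

theory Submission
  imports Defs "HOL-Real_Asymp.Real_Asymp"
begin

(* Along the dyadic times n = 2^k it suffices to show that almost every (x, y) lies in
   E_{2^k, s_k} for all large k, where s_k = c (k log 2)^2 / 4^k: since E_{n, r} grows with n and r,
   the lower bound on r_n then gives the liminf statement for all n.
   Fix y. By the Diophantine condition the points T_2^j y, j < 2^k, are 2 s_k-separated, so they are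
   centres of disjoint intervals of total length 2^k s_k. If (x, y) is not in E_{2^k, s_k}, then
   T_1^(l g) x avoids these intervals for all l < L = 2^k / g. Exponential mixing, applied once per
   time step g to the BV function "1 minus the indicator of the intervals", bounds the measure of
   such x by (1 - 2^k s_k)^L + L C (1 + 4 2^k) e^(-theta g). With g proportional to k both terms
   decay geometrically in k, and Borel-Cantelli applies. Only the (log q)^2 / q^2 part of the two
   growth conditions is needed. *)

lemma space_circle_measure [simp]: "space circle_measure = circle"
  by (simp add: circle_measure_def space_restrict_space)

lemma sets_circle_measure_iff: "A \<in> sets circle_measure \<longleftrightarrow> A \<in> sets borel \<and> A \<subseteq> circle"
  unfolding circle_measure_def circle_def by (subst sets_restrict_space_iff) auto

lemma circle_borel [measurable]: "circle \<in> sets borel"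
  by (simp add: circle_def)

lemma measure_circle_measure:
  "A \<in> sets borel \<Longrightarrow> A \<subseteq> circle \<Longrightarrow> measure circle_measure A = measure lborel A"
  unfolding circle_measure_def measure_def by (subst emeasure_restrict_space) auto

lemma prob_space_circle_measure: "prob_space circle_measure"
proof
  have "emeasure circle_measure circle = emeasure lborel {0..<(1::real)}"
    unfolding circle_measure_def by (subst emeasure_restrict_space) (auto simp: circle_def)
  then show "emeasure circle_measure (space circle_measure) = 1" by simp
qed

lemma borel_measurable_circle_measure:
  "f \<in> borel_measurable borel \<Longrightarrow> f \<in> borel_measurable circle_measure"
  unfolding circle_measure_def by (rule measurable_restrict_space1) simp

lemma measurable_circle_measure_imp_borel:
  assumes "f \<in> measurable circle_measure circle_measure"
  shows "f \<in> borel_measurable circle_measure"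
proof -
  have "(\<lambda>x. x) \<in> borel_measurable circle_measure"
    by (rule borel_measurable_circle_measure) simp
  then show ?thesis using measurable_compose[OF assms] by blast
qed

lemma measurable_funpow: "f \<in> measurable M M \<Longrightarrow> (f ^^ n) \<in> measurable M M"
  by (induction n) auto

lemma circ_dist_le_abs_sub_int: "circ_dist x y \<le> \<bar>x - y - of_int p\<bar>"
  unfolding circ_dist_def by (rule round_diff_minimal)

lemma circ_dist_le_abs: "circ_dist x y \<le> \<bar>x - y\<bar>"
  using circ_dist_le_abs_sub_int[of x y 0] by simp

lemma circ_dist_add_int: "circ_dist (x + of_int p) y = circ_dist x y"
proof -
  have "round (x + of_int p - y) = round (x - y) + p"
    using floor_add_int[of "x - y + 1/2" p] by (simp add: round_def algebra_simps)
  then show ?thesis by (simp add: circ_dist_def algebra_simps)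
qed

lemma circ_dist_commute: "circ_dist x y = circ_dist y x"
proof -
  have "circ_dist x y \<le> circ_dist y x" for x y
    using circ_dist_le_abs_sub_int[of x y "- round (y - x)"]
    by (simp add: circ_dist_def abs_minus_commute algebra_simps)
  then show ?thesis by (simp add: order_antisym)
qed

lemma borel_measurable_circ_dist [measurable]:
  assumes [measurable]: "f \<in> borel_measurable M" "g \<in> borel_measurable M"
  shows "(\<lambda>z. circ_dist (f z) (g z)) \<in> borel_measurable M"
proof -
  have "(\<lambda>z. real_of_int \<lfloor>f z - g z + 1/2\<rfloor>) \<in> borel_measurable M"
    using measurable_compose[OF _ borel_measurable_real_floor, of "\<lambda>z. f z - g z + 1/2"]
    by measurable
  then show ?thesis unfolding circ_dist_def round_def by measurable
qed

lemma funpow_rotation: "\<exists>z::int. (rotation a ^^ j) y = y + real j * a + of_int z"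
proof (induction j)
  case 0
  show ?case by (auto intro: exI[of _ 0])
next
  case (Suc j)
  then obtain z :: int where z: "(rotation a ^^ j) y = y + real j * a + of_int z" by blast
  have "(rotation a ^^ Suc j) y
      = y + real (Suc j) * a + of_int (z - \<lfloor>(rotation a ^^ j) y + a\<rfloor>)"
    unfolding funpow.simps comp_def rotation_def frac_def z by (simp add: algebra_simps)
  then show ?case by blast
qed

lemma funpow_rotation_in_circle: "y \<in> circle \<Longrightarrow> (rotation a ^^ j) y \<in> circle"
  by (cases j) (auto simp: rotation_def circle_def frac_lt_1)

lemma rotation_measurable: "rotation a \<in> measurable circle_measure circle_measure"
proof -
  have "rotation a \<in> borel_measurable circle_measure"
    by (rule borel_measurable_circle_measure) (unfold rotation_def frac_def, measurable)
  moreover have "rotation a x \<in> circle" for x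
    by (simp add: rotation_def circle_def frac_lt_1)
  ultimately show ?thesis
    unfolding circle_measure_def by (intro measurable_restrict_space2) auto
qed

lemma circ_dist_funpow_rotation:
  assumes "j' \<le> j"
  shows "circ_dist ((rotation a ^^ j) y) ((rotation a ^^ j') y) = circ_dist (real (j - j') * a) 0"
proof -
  obtain z z' :: int where z: "(rotation a ^^ j) y = y + real j * a + of_int z"
    and z': "(rotation a ^^ j') y = y + real j' * a + of_int z'"
    using funpow_rotation by metis
  have "(rotation a ^^ j) y - (rotation a ^^ j') y = real (j - j') * a + of_int (z - z')"
    unfolding z z' using assms by (simp add: of_nat_diff algebra_simps)
  then show ?thesis
    using circ_dist_add_int[of "real (j - j') * a" "z - z'" 0]
    by (simp add: circ_dist_def)
qed

lemma circ_dist_rotation_orbit_ge: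
  assumes gap: "\<And>q. 0 < q \<Longrightarrow> q < m \<Longrightarrow> d \<le> circ_dist (real q * \<alpha>) 0"
    and "j < m" "j' < m" "j \<noteq> j'"
  shows "d \<le> circ_dist ((rotation \<alpha> ^^ j) y) ((rotation \<alpha> ^^ j') y)"
proof (cases "j' < j")
  case True
  then show ?thesis
    using gap[of "j - j'"] assms circ_dist_funpow_rotation[of j' j] by simp
next
  case False
  then show ?thesis
    using gap[of "j' - j"] assms circ_dist_funpow_rotation[of j j'] circ_dist_commute by simp
qed

lemma E_set_mono: "n \<le> n' \<Longrightarrow> r \<le> r' \<Longrightarrow> E_set T1 T2 n r \<subseteq> E_set T1 T2 n' r'"
  unfolding E_set_def by (auto 0 4 intro: less_le_trans)

lemma E_setI:
  "x \<in> circle \<Longrightarrow> y \<in> circle \<Longrightarrow> i < n \<Longrightarrow> j < n \<Longrightarrow> circ_dist ((T1 ^^ i) x) ((T2 ^^ j) y) < r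
    \<Longrightarrow> (x, y) \<in> E_set T1 T2 n r"
  unfolding E_set_def by blast

lemma E_set_measurable:
  assumes "T1 \<in> measurable circle_measure circle_measure"
    and "T2 \<in> measurable circle_measure circle_measure"
  shows "E_set T1 T2 n r \<in> sets (circle_measure \<Otimes>\<^sub>M circle_measure)"
proof -
  let ?M = "circle_measure \<Otimes>\<^sub>M circle_measure"
  have [measurable]: "(\<lambda>z. (T1 ^^ i) (fst z)) \<in> borel_measurable ?M"
    "(\<lambda>z. (T2 ^^ i) (snd z)) \<in> borel_measurable ?M" for i
    using assms by (auto intro!: measurable_compose[OF _ measurable_circle_measure_imp_borel]
        measurable_funpow measurable_fst'' measurable_snd'')
  have "{z \<in> space ?M. \<exists>i<n. \<exists>j<n. circ_dist ((T1 ^^ i) (fst z)) ((T2 ^^ j) (snd z)) < r}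
      \<in> sets ?M"
    by measurable
  moreover have "E_set T1 T2 n r
      = {z \<in> space ?M. \<exists>i<n. \<exists>j<n. circ_dist ((T1 ^^ i) (fst z)) ((T2 ^^ j) (snd z)) < r}"
    unfolding E_set_def space_pair_measure by fastforce
  ultimately show ?thesis by simp
qed

section \<open>Variation of unions of intervals\<close>

definition circle_partition :: "nat \<Rightarrow> (nat \<Rightarrow> real) \<Rightarrow> bool" where
  "circle_partition n x \<longleftrightarrow>
     n \<ge> 1 \<and> (\<forall>i<n. x i \<in> circle) \<and> (\<forall>i j. i < j \<and> j < n \<longrightarrow> x i < x j)"

definition cyclic_variation_sum :: "(real \<Rightarrow> real) \<Rightarrow> nat \<Rightarrow> (nat \<Rightarrow> real) \<Rightarrow> real" where
  "cyclic_variation_sum f n x = (\<Sum>i<n. \<bar>f (x (Suc i mod n)) - f (x i)\<bar>)"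

lemma circ_variation_le:
  assumes "\<And>n x. circle_partition n x \<Longrightarrow> cyclic_variation_sum f n x \<le> B"
  shows "circ_variation f \<le> ereal B"
  unfolding circ_variation_def
  by (rule SUP_least) (use assms in \<open>auto simp: circle_partition_def cyclic_variation_sum_def\<close>)

lemma circ_variation_nonneg: "circ_variation f \<ge> 0"
proof -
  have "(1, \<lambda>_. 0) \<in> {(n, x). (n::nat) \<ge> 1 \<and> (\<forall>i<n. x i \<in> circle) \<and>
                       (\<forall>i j. i < j \<and> j < n \<longrightarrow> (x::nat\<Rightarrow>real) i < x j)}"
    by (auto simp: circle_def)
  from SUP_upper[OF this, of "\<lambda>p. ereal (\<Sum>i<fst p. \<bar>f (snd p (Suc i mod fst p)) - f (snd p i)\<bar>)"]
  show ?thesis unfolding circ_variation_def by (simp add: zero_ereal_def)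
qed

text \<open>Cyclically, a monotone function with values in \<open>[0, 1]\<close> rises by at most \<open>1\<close>
  and then drops back once.\<close>
lemma cyclic_variation_sum_mono_le:
  assumes "circle_partition n x" and "mono f" and "\<And>t. 0 \<le> f t \<and> f t \<le> 1"
  shows "cyclic_variation_sum f n x \<le> 2"
proof -
  obtain k where n: "n = Suc k"
    using assms(1) by (cases n) (auto simp: circle_partition_def)
  have x_mono: "x i \<le> x (Suc i)" if "i < k" for i
    using assms(1) n that by (auto simp: circle_partition_def less_imp_le)
  have "cyclic_variation_sum f n x = (\<Sum>i<k. \<bar>f (x (Suc i)) - f (x i)\<bar>) + \<bar>f (x 0) - f (x k)\<bar>"
    unfolding cyclic_variation_sum_def n by simp
  also have "(\<Sum>i<k. \<bar>f (x (Suc i)) - f (x i)\<bar>) = (\<Sum>i<k. f (x (Suc i)) - f (x i))"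
    using x_mono monoD[OF \<open>mono f\<close>] by (intro sum.cong) auto
  also have "\<dots> = f (x k) - f (x 0)"
    by (rule sum_lessThan_telescope)
  finally show ?thesis
    using assms(3)[of "x k"] assms(3)[of "x 0"] by linarith
qed

lemma cyclic_variation_sum_diff_le:
  "cyclic_variation_sum (\<lambda>t. f t - g t) n x \<le> cyclic_variation_sum f n x + cyclic_variation_sum g n x"
  unfolding cyclic_variation_sum_def sum.distrib[symmetric] by (rule sum_mono) linarith

lemma cyclic_variation_sum_max_le:
  "cyclic_variation_sum (\<lambda>t. max (f t) (g t)) n x
     \<le> cyclic_variation_sum f n x + cyclic_variation_sum g n x"
  unfolding cyclic_variation_sum_def sum.distrib[symmetric]
  by (rule sum_mono) (simp add: max_def, linarith)

lemma cyclic_variation_sum_one_minus: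
  "cyclic_variation_sum (\<lambda>t. 1 - f t) n x = cyclic_variation_sum f n x"
  unfolding cyclic_variation_sum_def by (rule sum.cong) auto

lemma cyclic_variation_sum_indicator_interval:
  assumes "circle_partition n x" and "u < v"
  shows "cyclic_variation_sum (indicator {u<..<v}) n x \<le> 4"
proof -
  have "indicator {u<..<v} = (\<lambda>t. (if u < t then 1 else 0) - (if v \<le> t then 1 else 0 :: real))"
    using assms(2) by (auto simp: indicator_def fun_eq_iff)
  then have "cyclic_variation_sum (indicator {u<..<v}) n x
      \<le> cyclic_variation_sum (\<lambda>t. if u < t then 1 else 0) n x
        + cyclic_variation_sum (\<lambda>t. if v \<le> t then 1 else 0) n x"
    using cyclic_variation_sum_diff_le by metis
  also have "\<dots> \<le> 2 + 2"
    by (intro add_mono cyclic_variation_sum_mono_le[OF assms(1)]) (auto intro: monoI)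
  finally show ?thesis by simp
qed

lemma cyclic_variation_sum_indicator_intervals:
  assumes "circle_partition n x" and "\<And>j. j < m \<Longrightarrow> u j < v j"
  shows "cyclic_variation_sum (indicator (\<Union>j<m. {u j<..<v j})) n x \<le> 4 * real m"
  using assms(2)
proof (induction m)
  case 0
  then show ?case by (simp add: cyclic_variation_sum_def)
next
  case (Suc m)
  have "indicator (\<Union>j<Suc m. {u j<..<v j})
      = (\<lambda>t. max (indicator (\<Union>j<m. {u j<..<v j}) t) (indicator {u m<..<v m} t) :: real)"
    by (auto simp: indicator_def fun_eq_iff lessThan_Suc)
  then have "cyclic_variation_sum (indicator (\<Union>j<Suc m. {u j<..<v j})) n x
      \<le> cyclic_variation_sum (indicator (\<Union>j<m. {u j<..<v j})) n x
        + cyclic_variation_sum (indicator {u m<..<v m}) n x"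
    using cyclic_variation_sum_max_le by metis
  also have "\<dots> \<le> 4 * real m + 4"
    using Suc by (intro add_mono cyclic_variation_sum_indicator_interval[OF assms(1)]) auto
  finally show ?case by simp
qed

lemma bv_norm_complement_intervals:
  assumes "\<And>j. j < m \<Longrightarrow> u j < v j"
  defines "\<psi> \<equiv> \<lambda>t. 1 - indicator (\<Union>j<m. {u j<..<v j}) t :: real"
  shows "bounded_variation \<psi>" and "0 \<le> bv_norm \<psi>" and "bv_norm \<psi> \<le> 1 + 4 * real m"
proof -
  have "circ_variation \<psi> \<le> ereal (4 * real m)"
    unfolding \<psi>_def
    by (rule circ_variation_le)
      (simp add: cyclic_variation_sum_one_minus cyclic_variation_sum_indicator_intervals assms)
  with circ_variation_nonneg[of \<psi>] obtain w
    where w: "circ_variation \<psi> = ereal w" "0 \<le> w" "w \<le> 4 * real m"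
    by (cases "circ_variation \<psi>") auto
  show "bounded_variation \<psi>"
    unfolding bounded_variation_def w by simp
  have "circle \<noteq> {}" "0 \<in> circle"
    by (auto simp: circle_def)
  moreover have "bdd_above ((\<lambda>t. \<bar>\<psi> t\<bar>) ` circle)" "\<And>t. \<bar>\<psi> t\<bar> \<le> 1"
    by (auto intro: bdd_aboveI[of _ 1] simp: \<psi>_def indicator_def)
  ultimately have "0 \<le> (SUP t\<in>circle. \<bar>\<psi> t\<bar>)" "(SUP t\<in>circle. \<bar>\<psi> t\<bar>) \<le> 1"
    by (meson abs_ge_zero cSUP_upper order_trans, meson cSUP_least)
  then show "0 \<le> bv_norm \<psi>" "bv_norm \<psi> \<le> 1 + 4 * real m"
    unfolding bv_norm_def w using w by simp_all
qed

section \<open>Exponential mixing along an arithmetic progression of times\<close>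

definition exp_mixing_with :: "real \<Rightarrow> real \<Rightarrow> (real \<Rightarrow> real) \<Rightarrow> bool" where
  "exp_mixing_with C \<theta> T \<longleftrightarrow>
     (\<forall>\<psi> \<phi> (n::nat). \<psi> \<in> borel_measurable circle_measure \<and> bounded_variation \<psi>
        \<and> Linf circle_measure \<phi> \<longrightarrow>
      \<bar>(\<integral>x. \<psi> x * \<phi> ((T ^^ n) x) \<partial>circle_measure)
        - (\<integral>x. \<psi> x \<partial>circle_measure) * (\<integral>x. \<phi> x \<partial>circle_measure)\<bar>
      \<le> C * bv_norm \<psi> * Linf_norm circle_measure \<phi> * exp (- \<theta> * real n))"

lemma exp_mixing_withD:
  assumes "exp_mixing_with C \<theta> T" and "\<psi> \<in> borel_measurable circle_measure"
    and "bounded_variation \<psi>" and "Linf circle_measure \<phi>"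
  shows "\<bar>(\<integral>x. \<psi> x * \<phi> ((T ^^ n) x) \<partial>circle_measure)
      - (\<integral>x. \<psi> x \<partial>circle_measure) * (\<integral>x. \<phi> x \<partial>circle_measure)\<bar>
    \<le> C * bv_norm \<psi> * Linf_norm circle_measure \<phi> * exp (- \<theta> * real n)"
  using assms unfolding exp_mixing_with_def by blast

lemma exp_mixing_BV_Linf_iff:
  "exp_mixing_BV_Linf T \<longleftrightarrow> (\<exists>C \<theta>. C > 0 \<and> \<theta> > 0 \<and> exp_mixing_with C \<theta> T)"
  unfolding exp_mixing_BV_Linf_def exp_mixing_with_def ..

lemma Linf_bounded:
  assumes "f \<in> borel_measurable M" and "\<And>x. \<bar>f x\<bar> \<le> 1"
  shows "Linf M f" and "Linf_norm M f \<le> 1"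
proof -
  have "esssup M (\<lambda>x. ereal \<bar>f x\<bar>) \<le> 1"
    by (rule esssup_I) (use assms in auto)
  then show "Linf M f" "Linf_norm M f \<le> 1"
    using assms(1) unfolding Linf_def Linf_norm_def
    by (cases "esssup M (\<lambda>x. ereal \<bar>f x\<bar>)"; simp)+
qed

lemma Linf_norm_nonneg:
  assumes "prob_space M"
  shows "0 \<le> Linf_norm M f"
proof -
  have "esssup M (\<lambda>_. 0) \<le> esssup M (\<lambda>x. ereal \<bar>f x\<bar>)"
    by (rule esssup_AE_mono) auto
  then show ?thesis
    unfolding Linf_norm_def using prob_space.emeasure_space_1[OF assms]
    by (intro real_of_ereal_pos) (simp add: esssup_const)
qed

lemma prod_funpow_Suc_shift:
  "(\<Prod>l<Suc L. f ((T ^^ (l * g)) x)) = f x * (\<Prod>l<L. f ((T ^^ (l * g)) ((T ^^ g) x)))"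
proof -
  have "f ((T ^^ (Suc l * g)) x) = f ((T ^^ (l * g)) ((T ^^ g) x))" for l
    by (simp only: mult_Suc add.commute[of g] funpow_add comp_apply)
  then show ?thesis
    unfolding prod.lessThan_Suc_shift by simp
qed

text \<open>Each time step \<open>g\<close> decorrelates one more factor of the product, at the cost \<open>D\<close>
  of one application of mixing against the (bounded) remaining product.\<close>
lemma integral_prod_iterates_le:
  fixes T :: "'a \<Rightarrow> 'a" and \<psi> :: "'a \<Rightarrow> real"
  assumes "prob_space M" and T: "T \<in> measurable M M"
    and \<psi>: "\<psi> \<in> borel_measurable M" "\<And>t. 0 \<le> \<psi> t \<and> \<psi> t \<le> 1" and "0 \<le> D"
    and mix: "\<And>\<phi>. Linf M \<phi> \<Longrightarrow>
       \<bar>(\<integral>x. \<psi> x * \<phi> ((T ^^ g) x) \<partial>M) - (\<integral>x. \<psi> x \<partial>M) * (\<integral>x. \<phi> x \<partial>M)\<bar>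
         \<le> D * Linf_norm M \<phi>"
  shows "(\<integral>x. (\<Prod>l<L. \<psi> ((T ^^ (l * g)) x)) \<partial>M) \<le> (\<integral>x. \<psi> x \<partial>M) ^ L + real L * D"
proof (induction L)
  case 0
  interpret prob_space M by fact
  show ?case by (simp add: prob_space)
next
  case (Suc L)
  interpret prob_space M by fact
  define a where "a = (\<integral>x. \<psi> x \<partial>M)"
  define \<Phi> where "\<Phi> z = (\<Prod>l<L. \<psi> ((T ^^ (l * g)) z))" for z
  have \<Phi>_meas: "\<Phi> \<in> borel_measurable M"
    unfolding \<Phi>_def
    by (intro borel_measurable_prod measurable_compose[OF measurable_funpow[OF T] \<psi>(1)])
  have "\<bar>\<Phi> z\<bar> \<le> 1" for z
    unfolding \<Phi>_def abs_prod by (rule prod_le_1) (use \<psi>(2) in auto)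
  note \<Phi>_Linf = Linf_bounded[OF \<Phi>_meas this]
  have "0 \<le> a"
    unfolding a_def by (rule integral_nonneg_AE) (use \<psi>(2) in auto)
  have "a \<le> 1"
    unfolding a_def
    by (rule integral_le_const)
      (use \<psi> in \<open>auto intro!: integrable_const_bound[where B=1]\<close>)
  have shift: "\<psi> x * \<Phi> ((T ^^ g) x) = (\<Prod>l<Suc L. \<psi> ((T ^^ (l * g)) x))" for x
    unfolding \<Phi>_def prod_funpow_Suc_shift ..
  have "D * Linf_norm M \<Phi> \<le> D"
    using \<Phi>_Linf(2) \<open>0 \<le> D\<close> by (simp add: mult_left_le)
  with mix[OF \<Phi>_Linf(1)]
  have "(\<integral>x. (\<Prod>l<Suc L. \<psi> ((T ^^ (l * g)) x)) \<partial>M) \<le> a * (\<integral>x. \<Phi> x \<partial>M) + D"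
    unfolding shift a_def by linarith
  also have "a * (\<integral>x. \<Phi> x \<partial>M) \<le> a * (a ^ L + real L * D)"
    using Suc \<open>0 \<le> a\<close> unfolding \<Phi>_def a_def by (intro mult_left_mono) auto
  also have "\<dots> \<le> a ^ Suc L + real L * D"
    using \<open>0 \<le> a\<close> \<open>a \<le> 1\<close> \<open>0 \<le> D\<close>
    by (simp add: algebra_simps mult_left_le_one_le mult_left_mono)
  finally show ?case
    unfolding a_def by (simp add: algebra_simps)
qed

lemma exp_mixing_with_le:
  assumes mix: "exp_mixing_with C \<theta> T" and "0 \<le> C"
    and \<psi>: "\<psi> \<in> borel_measurable circle_measure" "bounded_variation \<psi>"
    and "0 \<le> bv_norm \<psi>" and "bv_norm \<psi> \<le> B" and \<phi>: "Linf circle_measure \<phi>"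
  shows "\<bar>(\<integral>x. \<psi> x * \<phi> ((T ^^ g) x) \<partial>circle_measure)
      - (\<integral>x. \<psi> x \<partial>circle_measure) * (\<integral>x. \<phi> x \<partial>circle_measure)\<bar>
    \<le> C * B * exp (- \<theta> * real g) * Linf_norm circle_measure \<phi>"
proof -
  have "\<bar>(\<integral>x. \<psi> x * \<phi> ((T ^^ g) x) \<partial>circle_measure)
      - (\<integral>x. \<psi> x \<partial>circle_measure) * (\<integral>x. \<phi> x \<partial>circle_measure)\<bar>
    \<le> C * bv_norm \<psi> * Linf_norm circle_measure \<phi> * exp (- \<theta> * real g)"
    by (rule exp_mixing_withD[OF mix \<psi> \<phi>])
  also have "\<dots> = (C * Linf_norm circle_measure \<phi> * exp (- \<theta> * real g)) * bv_norm \<psi>"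
    by algebra
  also have "\<dots> \<le> (C * Linf_norm circle_measure \<phi> * exp (- \<theta> * real g)) * B"
    using assms Linf_norm_nonneg[OF prob_space_circle_measure, of \<phi>]
    by (intro mult_left_mono) auto
  also have "\<dots> = C * B * exp (- \<theta> * real g) * Linf_norm circle_measure \<phi>"
    by algebra
  finally show ?thesis .
qed

lemma one_minus_power_le_exp:
  fixes x :: real
  assumes "x \<le> 1"
  shows "(1 - x) ^ n \<le> exp (- x * real n)"
proof -
  have "(1 - x) ^ n \<le> exp (- x) ^ n"
    using exp_ge_add_one_self[of "- x"] assms by (intro power_mono) auto
  also have "\<dots> = exp (- x * real n)"
    by (subst exp_of_nat_mult[symmetric]) (simp only: mult.commute)
  finally show ?thesis .
qed

lemma measure_disjoint_intervals:
  fixes lo :: "nat \<Rightarrow> real"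
  assumes "0 \<le> s" and disj: "disjoint_family_on (\<lambda>j. {lo j<..<lo j + s}) {..<m}"
    and sub: "\<And>j. j < m \<Longrightarrow> {lo j<..<lo j + s} \<subseteq> circle"
  shows "measure circle_measure (\<Union>j<m. {lo j<..<lo j + s}) = real m * s"
proof -
  have "measure circle_measure (\<Union>j<m. {lo j<..<lo j + s})
      = measure lborel (\<Union>j<m. {lo j<..<lo j + s})"
    using sub by (intro measure_circle_measure) auto
  also have "\<dots> = (\<Sum>j<m. measure lborel {lo j<..<lo j + s})"
    using disj \<open>0 \<le> s\<close> by (intro measure_finite_Union) (auto simp: emeasure_lborel_Ioo)
  finally show ?thesis
    using \<open>0 \<le> s\<close> by simp
qed

lemma avoiding_set_measurable:
  assumes T: "T \<in> measurable circle_measure circle_measure" and "A \<in> sets circle_measure"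
  shows "{x \<in> circle. \<forall>l<L. (T ^^ (l * g)) x \<notin> A} \<in> sets circle_measure"
proof -
  note [measurable] = measurable_funpow[OF T] \<open>A \<in> sets circle_measure\<close>
  have "{x \<in> space circle_measure. \<forall>l<L. (T ^^ (l * g)) x \<notin> A} \<in> sets circle_measure"
    by measurable
  then show ?thesis by (simp only: space_circle_measure)
qed

lemma measure_avoiding_set_eq_integral:
  assumes T: "T \<in> measurable circle_measure circle_measure" and A: "A \<in> sets circle_measure"
  shows "measure circle_measure {x \<in> circle. \<forall>l<L. (T ^^ (l * g)) x \<notin> A}
    = (\<integral>x. (\<Prod>l<L. 1 - indicator A ((T ^^ (l * g)) x)) \<partial>circle_measure)"
proof -
  define B where "B = {x \<in> circle. \<forall>l<L. (T ^^ (l * g)) x \<notin> A}"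
  have "indicator B x = (\<Prod>l<L. 1 - indicator A ((T ^^ (l * g)) x) :: real)"
    if "x \<in> circle" for x
  proof (cases "\<forall>l<L. (T ^^ (l * g)) x \<notin> A")
    case True
    then show ?thesis using that by (simp add: B_def)
  next
    case False
    then obtain l where "l < L" "(T ^^ (l * g)) x \<in> A" by blast
    then have "(\<Prod>l<L. 1 - indicator A ((T ^^ (l * g)) x) :: real) = 0"
      by (intro prod_zero bexI[of _ l]) auto
    with False show ?thesis by (simp add: B_def)
  qed
  then have "(\<integral>x. indicator B x \<partial>circle_measure)
      = (\<integral>x. (\<Prod>l<L. 1 - indicator A ((T ^^ (l * g)) x) :: real) \<partial>circle_measure)"
    by (intro Bochner_Integration.integral_cong) auto
  moreover have "B \<in> sets circle_measure"
    unfolding B_def by (rule avoiding_set_measurable[OF T A])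
  moreover have "B \<inter> space circle_measure = B"
    by (auto simp: B_def)
  ultimately show ?thesis
    unfolding B_def[symmetric] by simp
qed

definition avoidance_bound :: "real \<Rightarrow> real \<Rightarrow> nat \<Rightarrow> real \<Rightarrow> nat \<Rightarrow> nat \<Rightarrow> real" where
  "avoidance_bound C \<theta> m s L g =
     exp (- (real m * s) * real L) + real L * (C * (1 + 4 * real m) * exp (- \<theta> * real g))"

lemma measure_avoiding_intervals_le:
  fixes lo :: "nat \<Rightarrow> real"
  assumes mix: "exp_mixing_with C \<theta> T" and "0 \<le> C"
    and T: "T \<in> measurable circle_measure circle_measure" and "0 < s"
    and disj: "disjoint_family_on (\<lambda>j. {lo j<..<lo j + s}) {..<m}"
    and sub: "\<And>j. j < m \<Longrightarrow> {lo j<..<lo j + s} \<subseteq> circle"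
  defines "A \<equiv> \<Union>j<m. {lo j<..<lo j + s}"
  shows "measure circle_measure {x \<in> circle. \<forall>l<L. (T ^^ (l * g)) x \<notin> A}
    \<le> avoidance_bound C \<theta> m s L g"
proof -
  interpret prob_space circle_measure by (rule prob_space_circle_measure)
  define \<psi> :: "real \<Rightarrow> real" where "\<psi> t = 1 - indicator A t" for t
  have A_sets: "A \<in> sets circle_measure"
    using sub by (auto simp: A_def sets_circle_measure_iff)
  have measure_A: "measure circle_measure A = real m * s"
    unfolding A_def using \<open>0 < s\<close> disj sub by (intro measure_disjoint_intervals) auto
  have \<psi>_meas: "\<psi> \<in> borel_measurable circle_measure"
    using A_sets unfolding \<psi>_def by measurable
  have \<psi>_bounds: "0 \<le> \<psi> t \<and> \<psi> t \<le> 1" for t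
    by (simp add: \<psi>_def indicator_def)
  have \<psi>_bv: "bounded_variation \<psi>" "0 \<le> bv_norm \<psi>" "bv_norm \<psi> \<le> 1 + 4 * real m"
    using bv_norm_complement_intervals[of m lo "\<lambda>j. lo j + s"] \<open>0 < s\<close>
    unfolding \<psi>_def A_def by auto
  have "(\<integral>x. \<psi> x \<partial>circle_measure) = 1 - measure circle_measure A"
    unfolding \<psi>_def using A_sets sets.sets_into_space[OF A_sets]
    by (subst Bochner_Integration.integral_diff)
      (auto simp: prob_space emeasure_eq_measure Int_absorb2 simp flip: space_circle_measure)
  then have integral_\<psi>: "(\<integral>x. \<psi> x \<partial>circle_measure) = 1 - real m * s"
    using measure_A by simp
  have "measure circle_measure {x \<in> circle. \<forall>l<L. (T ^^ (l * g)) x \<notin> A}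
      = (\<integral>x. (\<Prod>l<L. \<psi> ((T ^^ (l * g)) x)) \<partial>circle_measure)"
    unfolding \<psi>_def by (rule measure_avoiding_set_eq_integral[OF T A_sets])
  also have "\<dots> \<le> (1 - real m * s) ^ L + real L * (C * (1 + 4 * real m) * exp (- \<theta> * real g))"
    using integral_prod_iterates_le[OF prob_space_circle_measure T \<psi>_meas \<psi>_bounds _
        exp_mixing_with_le[OF mix \<open>0 \<le> C\<close> \<psi>_meas \<psi>_bv]] \<open>0 \<le> C\<close>
    unfolding integral_\<psi> by simp
  also have "(1 - real m * s) ^ L \<le> exp (- (real m * s) * real L)"
    using measure_A prob_le_1[of A] by (intro one_minus_power_le_exp) auto
  finally show ?thesis
    unfolding avoidance_bound_def by simp
qed

lemma separated_points_intervals: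
  fixes c :: "nat \<Rightarrow> real"
  assumes c: "\<And>j. j < m \<Longrightarrow> c j \<in> circle" and s: "0 < s" "s \<le> 1/2"
    and sep: "\<And>j j'. j < m \<Longrightarrow> j' < m \<Longrightarrow> j \<noteq> j' \<Longrightarrow> 2 * s \<le> circ_dist (c j) (c j')"
  obtains lo where "disjoint_family_on (\<lambda>j. {lo j<..<lo j + s}) {..<m}"
    and "\<And>j. j < m \<Longrightarrow> {lo j<..<lo j + s} \<subseteq> circle"
    and "\<And>j x. x \<in> {lo j<..<lo j + s} \<Longrightarrow> circ_dist x (c j) < s"
proof
  define lo where "lo j = (if c j + s < 1 then c j else c j - s)" for j
  have near: "\<bar>x - c j\<bar> < s" if "x \<in> {lo j<..<lo j + s}" for x j
    using that unfolding lo_def by (auto split: if_splits)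
  then show "circ_dist x (c j) < s" if "x \<in> {lo j<..<lo j + s}" for x j
    using that circ_dist_le_abs le_less_trans by blast
  show "{lo j<..<lo j + s} \<subseteq> circle" if "j < m" for j
    using c[OF that] s unfolding lo_def circle_def by auto
  show "disjoint_family_on (\<lambda>j. {lo j<..<lo j + s}) {..<m}"
    unfolding disjoint_family_on_def
  proof (intro ballI impI, rule ccontr)
    fix j j' assume "j \<in> {..<m}" "j' \<in> {..<m}" "j \<noteq> j'"
      and "{lo j<..<lo j + s} \<inter> {lo j'<..<lo j' + s} \<noteq> {}"
    then obtain x where "\<bar>x - c j\<bar> < s" "\<bar>x - c j'\<bar> < s"
      using near by blast
    then have "circ_dist (c j) (c j') < 2 * s"
      using circ_dist_le_abs[of "c j" "c j'"] by linarith
    with sep \<open>j \<in> {..<m}\<close> \<open>j' \<in> {..<m}\<close> \<open>j \<noteq> j'\<close> show False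
      by fastforce
  qed
qed

lemma measure_slice_not_in_E_set_le:
  assumes mix: "exp_mixing_with C \<theta> T" and "0 \<le> C"
    and T: "T \<in> measurable circle_measure circle_measure"
    and y: "y \<in> circle" and s: "0 < s" "s \<le> 1/2" and "0 < m" and "L * g \<le> m"
    and gap: "\<And>q. 0 < q \<Longrightarrow> q < m \<Longrightarrow> 2 * s \<le> circ_dist (real q * \<alpha>) 0"
  shows "measure circle_measure {x \<in> circle. (x, y) \<notin> E_set T (rotation \<alpha>) m s}
    \<le> avoidance_bound C \<theta> m s L g"
proof -
  interpret prob_space circle_measure by (rule prob_space_circle_measure)
  define c where "c j = (rotation \<alpha> ^^ j) y" for j
  have c_in: "c j \<in> circle" for j
    unfolding c_def by (rule funpow_rotation_in_circle[OF y])
  have sep: "2 * s \<le> circ_dist (c j) (c j')" if "j < m" "j' < m" "j \<noteq> j'" for j j'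
    unfolding c_def using gap that by (rule circ_dist_rotation_orbit_ge)
  obtain lo
    where disj: "disjoint_family_on (\<lambda>j. {lo j<..<lo j + s}) {..<m}"
      and sub: "\<And>j. j < m \<Longrightarrow> {lo j<..<lo j + s} \<subseteq> circle"
      and near: "\<And>j x. x \<in> {lo j<..<lo j + s} \<Longrightarrow> circ_dist x (c j) < s"
    using separated_points_intervals[of m c s, OF c_in s sep] by blast
  let ?A = "\<Union>j<m. {lo j<..<lo j + s}"
  have "{x \<in> circle. (x, y) \<notin> E_set T (rotation \<alpha>) m s}
      \<subseteq> {x \<in> circle. \<forall>l<L. (T ^^ (l * g)) x \<notin> ?A}"
  proof safe
    fix x l j assume x: "x \<in> circle" "(x, y) \<notin> E_set T (rotation \<alpha>) m s"
      and "l < L" "j < m" "(T ^^ (l * g)) x \<in> {lo j<..<lo j + s}"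
    moreover have "l * g < m"
    proof (cases "g = 0")
      case False
      then have "l * g < L * g" using \<open>l < L\<close> by simp
      then show ?thesis using \<open>L * g \<le> m\<close> by linarith
    qed (use \<open>0 < m\<close> in simp)
    ultimately have "(x, y) \<in> E_set T (rotation \<alpha>) m s"
      using near y unfolding c_def by (intro E_setI)
    with x show False by simp
  qed
  moreover have "?A \<in> sets circle_measure"
    unfolding sets_circle_measure_iff using sub by auto
  ultimately have "measure circle_measure {x \<in> circle. (x, y) \<notin> E_set T (rotation \<alpha>) m s}
      \<le> measure circle_measure {x \<in> circle. \<forall>l<L. (T ^^ (l * g)) x \<notin> ?A}"
    by (intro finite_measure_mono avoiding_set_measurable[OF T])
  also have "\<dots> \<le> avoidance_bound C \<theta> m s L g"
    by (rule measure_avoiding_intervals_le[OF mix \<open>0 \<le> C\<close> T s(1) disj sub])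
  finally show ?thesis .
qed

section \<open>Diophantine estimates\<close>

lemma ln_ln_powr_ge_one:
  fixes x e :: real
  assumes "27 \<le> x" and "0 \<le> e"
  shows "1 \<le> ln (ln x) powr e"
proof -
  have "exp (exp 1) \<le> exp (3::real)"
    using exp_le by simp
  also have "exp (3::real) = exp 1 ^ 3"
    by (simp add: exp_of_nat_mult[symmetric])
  also have "\<dots> \<le> 3 ^ 3"
    by (intro power_mono exp_le) auto
  finally have "exp (exp 1) \<le> x"
    using assms by simp
  then have "exp 1 \<le> ln x"
    using assms by (subst ln_ge_iff) auto
  then have "1 \<le> ln (ln x)"
    by (subst ln_ge_iff) (auto intro: less_le_trans[OF exp_gt_zero])
  then show ?thesis
    using assms(2) by (rule ge_one_powr_ge_zero)
qed

lemma eventually_log_bound_of_loglog_bound: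
  fixes f :: "nat \<Rightarrow> real"
  assumes "\<exists>N. \<forall>n \<ge> N. f n \<ge> a * (ln (real n))\<^sup>2 * (ln (ln (real n))) powr e / (real n)\<^sup>2"
    and "0 \<le> a" and "0 \<le> e"
  shows "eventually (\<lambda>n. a * (ln (real n) / real n)\<^sup>2 \<le> f n) sequentially"
proof -
  obtain N where N: "\<And>n. n \<ge> N \<Longrightarrow> a * (ln (real n))\<^sup>2 * (ln (ln (real n))) powr e / (real n)\<^sup>2 \<le> f n"
    using assms(1) by blast
  have "a * (ln (real n) / real n)\<^sup>2 \<le> f n" if "n \<ge> max N 27" for n
  proof -
    have "a * (ln (real n))\<^sup>2 * 1 / (real n)\<^sup>2
        \<le> a * (ln (real n))\<^sup>2 * (ln (ln (real n))) powr e / (real n)\<^sup>2"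
      using that assms(2,3) ln_ln_powr_ge_one[of "real n" e]
      by (intro divide_right_mono mult_left_mono) auto
    with N[of n] that show ?thesis
      by (simp add: power_divide)
  qed
  then show ?thesis
    unfolding eventually_sequentially by blast
qed

lemma eventually_circ_dist_of_dioph:
  assumes "\<exists>Q. \<forall>q::nat \<ge> Q. \<forall>p::int.
      \<bar>real q * \<alpha> - real_of_int p\<bar> \<ge> a * (ln (real q))\<^sup>2 * (ln (ln (real q))) powr e / (real q)\<^sup>2"
    and "0 \<le> a" and "0 \<le> e"
  shows "eventually (\<lambda>q. a * (ln (real q) / real q)\<^sup>2 \<le> circ_dist (real q * \<alpha>) 0) sequentially"
proof (rule eventually_log_bound_of_loglog_bound[OF _ assms(2,3)])
  from assms(1) obtain Q where "\<forall>q \<ge> Q. \<forall>p::int.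
      \<bar>real q * \<alpha> - real_of_int p\<bar> \<ge> a * (ln (real q))\<^sup>2 * (ln (ln (real q))) powr e / (real q)\<^sup>2"
    by blast
  then have "\<forall>q \<ge> Q. circ_dist (real q * \<alpha>) 0
      \<ge> a * (ln (real q))\<^sup>2 * (ln (ln (real q))) powr e / (real q)\<^sup>2"
    by (simp add: circ_dist_def)
  then show "\<exists>Q. \<forall>q \<ge> Q. circ_dist (real q * \<alpha>) 0
      \<ge> a * (ln (real q))\<^sup>2 * (ln (ln (real q))) powr e / (real q)\<^sup>2"
    by blast
qed

lemma circ_dist_multiple_eq_zero:
  assumes "circ_dist (real q * \<alpha>) 0 = 0"
  shows "circ_dist (real (n * q) * \<alpha>) 0 = 0"
proof -
  have "real q * \<alpha> = of_int (round (real q * \<alpha>))"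
    using assms by (simp add: circ_dist_def)
  then have "circ_dist (real (n * q) * \<alpha>) 0 \<le> 0"
    using circ_dist_le_abs_sub_int[of "real (n * q) * \<alpha>" 0 "int n * round (real q * \<alpha>)"]
    by (simp add: algebra_simps)
  then show ?thesis
    by (simp add: circ_dist_def)
qed

lemma circ_dist_multiple_pos:
  assumes "0 < a" and "0 < q"
    and large: "\<And>q. q \<ge> Q \<Longrightarrow> a * (ln (real q) / real q)\<^sup>2 \<le> circ_dist (real q * \<alpha>) 0"
  shows "0 < circ_dist (real q * \<alpha>) 0"
proof (rule ccontr)
  assume "\<not> ?thesis"
  then have "circ_dist (real q * \<alpha>) 0 = 0"
    by (simp add: circ_dist_def)
  define n where "n = (Q + 2) * q"
  have "circ_dist (real n * \<alpha>) 0 = 0"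
    unfolding n_def by (rule circ_dist_multiple_eq_zero) fact
  moreover have "(Q + 2) * 1 \<le> n"
    using \<open>0 < q\<close> unfolding n_def by (intro mult_le_mono2) simp
  then have "Q \<le> n" and "1 < real n"
    by simp_all
  then have "0 < a * (ln (real n) / real n)\<^sup>2"
    using \<open>0 < a\<close> ln_gt_zero[OF \<open>1 < real n\<close>]
    by (intro mult_pos_pos zero_less_power divide_pos_pos) linarith+
  ultimately show False
    using large[OF \<open>Q \<le> n\<close>] by linarith
qed

lemma ln_over_self_sq_antimono:
  fixes x y :: real
  assumes "exp 1 \<le> x" and "x \<le> y"
  shows "(ln y / y)\<^sup>2 \<le> (ln x / x)\<^sup>2"
proof (rule power_mono)
  show "ln y / y \<le> ln x / x"
    using assms by (rule ln_x_over_x_mono)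
  have "1 \<le> y"
    using assms exp_ge_add_one_self[of 1] by linarith
  then show "0 \<le> ln y / y"
    by simp
qed

text \<open>For \<open>q < Q\<close> the gap is bounded below by a fixed positive number, since \<open>\<alpha>\<close> is
  irrational; for \<open>q \<ge> Q\<close> the bound is inherited from the monotonicity of \<open>ln x / x\<close>.\<close>
lemma eventually_rotation_gap:
  assumes "0 < a"
    and bound: "eventually (\<lambda>q. a * (ln (real q) / real q)\<^sup>2 \<le> circ_dist (real q * \<alpha>) 0) sequentially"
  shows "eventually (\<lambda>N. \<forall>q. 0 < q \<longrightarrow> q < N \<longrightarrow>
           a * (ln (real N) / real N)\<^sup>2 \<le> circ_dist (real q * \<alpha>) 0) sequentially"
proof -
  obtain Q where Q: "Q \<ge> 3"
    and large: "\<And>q. q \<ge> Q \<Longrightarrow> a * (ln (real q) / real q)\<^sup>2 \<le> circ_dist (real q * \<alpha>) 0"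
    using bound unfolding eventually_sequentially by (metis max.cobounded1 max.cobounded2 order_trans)
  have lim: "(\<lambda>N. a * (ln (real N) / real N)\<^sup>2) \<longlonglongrightarrow> 0"
    by real_asymp
  have "eventually (\<lambda>N. \<forall>q\<in>{0<..<Q}. a * (ln (real N) / real N)\<^sup>2 < circ_dist (real q * \<alpha>) 0)
      sequentially"
    using order_tendstoD(2)[OF lim circ_dist_multiple_pos[OF \<open>0 < a\<close> _ large]]
    by (intro eventually_ball_finite) auto
  moreover have "eventually (\<lambda>N. N \<ge> Q) sequentially"
    by (rule eventually_ge_at_top)
  ultimately show ?thesis
  proof eventually_elim
    case (elim N)
    have "a * (ln (real N) / real N)\<^sup>2 \<le> circ_dist (real q * \<alpha>) 0" if "0 < q" "q < N" for q
    proof (cases "q < Q")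
      case True
      with elim \<open>0 < q\<close> show ?thesis by (simp add: less_imp_le)
    next
      case False
      have "exp 1 \<le> real q"
        using False Q exp_le by linarith
      then have "(ln (real N) / real N)\<^sup>2 \<le> (ln (real q) / real q)\<^sup>2"
        using \<open>q < N\<close> by (intro ln_over_self_sq_antimono) auto
      with large[of q] False \<open>0 < a\<close> show ?thesis
        by (meson mult_left_mono not_le order_trans less_imp_le)
    qed
    then show ?case by blast
  qed
qed

definition dyadic_radius :: "real \<Rightarrow> nat \<Rightarrow> real" where
  "dyadic_radius c k = c * (real k * ln 2)\<^sup>2 / 4 ^ k"

lemma ln_two_power_over_square: "(ln (2 ^ k) / 2 ^ k)\<^sup>2 = (real k * ln 2)\<^sup>2 / (4::real) ^ k"
proof -
  have "ln ((2::real) ^ k) = real k * ln 2"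
    by (simp add: ln_realpow)
  moreover have "((2::real) ^ k)\<^sup>2 = 4 ^ k"
    by (simp add: power2_eq_square power_mult_distrib[symmetric])
  ultimately show ?thesis
    by (simp add: power_divide)
qed

lemma dyadic_radius_eq: "dyadic_radius c k = c * (ln (2 ^ k) / 2 ^ k)\<^sup>2"
  unfolding dyadic_radius_def ln_two_power_over_square by simp

lemma dyadic_radius_nonneg: "0 \<le> c \<Longrightarrow> 0 \<le> dyadic_radius c k"
  by (simp add: dyadic_radius_def)

lemma eventually_dyadic_rotation_gap:
  assumes "0 < a"
    and bound: "eventually (\<lambda>q. a * (ln (real q) / real q)\<^sup>2 \<le> circ_dist (real q * \<alpha>) 0) sequentially"
    and "c \<le> a / 2"
  shows "eventually (\<lambda>k. \<forall>q. 0 < q \<longrightarrow> q < 2 ^ k \<longrightarrow>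
           2 * dyadic_radius c k \<le> circ_dist (real q * \<alpha>) 0) sequentially"
proof -
  obtain N0 where N0: "\<And>N q. N \<ge> N0 \<Longrightarrow> 0 < q \<Longrightarrow> q < N \<Longrightarrow>
      a * (ln (real N) / real N)\<^sup>2 \<le> circ_dist (real q * \<alpha>) 0"
    using eventually_rotation_gap[OF assms(1,2)] unfolding eventually_sequentially by blast
  have "2 * dyadic_radius c k \<le> circ_dist (real q * \<alpha>) 0"
    if "k \<ge> N0" "0 < q" "q < 2 ^ k" for k q
  proof -
    have "2 * dyadic_radius c k \<le> a * (ln (2 ^ k) / 2 ^ k)\<^sup>2"
      unfolding dyadic_radius_eq mult.assoc[symmetric] using \<open>c \<le> a / 2\<close>
      by (intro mult_right_mono) auto
    also have "\<dots> \<le> circ_dist (real q * \<alpha>) 0"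
      using N0[of "2 ^ k" q] that less_exp[of k] by simp
    finally show ?thesis .
  qed
  then show ?thesis
    unfolding eventually_sequentially by blast
qed

lemma eventually_dyadic_radius_le:
  assumes "decseq r" and bound: "eventually (\<lambda>n. a * (ln (real n) / real n)\<^sup>2 \<le> r n) sequentially"
    and "0 \<le> a" and "c \<le> a / 4"
  shows "eventually (\<lambda>k. \<forall>n. 2 ^ k \<le> n \<longrightarrow> n < 2 ^ (k + 1) \<longrightarrow> dyadic_radius c k \<le> r n)
    sequentially"
proof -
  obtain N0 where N0: "\<And>n. n \<ge> N0 \<Longrightarrow> a * (ln (real n) / real n)\<^sup>2 \<le> r n"
    using bound unfolding eventually_sequentially by blast
  have "dyadic_radius c k \<le> r n" if "k \<ge> N0" "n < 2 ^ (k + 1)" for k n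
  proof -
    have "dyadic_radius c k \<le> a / 4 * (real k * ln 2)\<^sup>2 / 4 ^ k"
      unfolding dyadic_radius_def using \<open>c \<le> a / 4\<close>
      by (intro divide_right_mono mult_right_mono) auto
    also have "\<dots> = a * (real k * ln 2)\<^sup>2 / 4 ^ (k + 1)"
      by simp
    also have "\<dots> \<le> a * (real (k + 1) * ln 2)\<^sup>2 / 4 ^ (k + 1)"
      using \<open>0 \<le> a\<close> by (intro divide_right_mono mult_left_mono power_mono mult_right_mono) auto
    also have "\<dots> = a * (ln (2 ^ (k + 1)) / 2 ^ (k + 1))\<^sup>2"
      unfolding ln_two_power_over_square by simp
    also have "\<dots> \<le> r (2 ^ (k + 1))"
      using N0[of "2 ^ (k + 1)"] that less_exp[of "k + 1"] by simp
    also have "\<dots> \<le> r n"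
      using \<open>decseq r\<close> that(2) by (simp add: decseqD)
    finally show ?thesis .
  qed
  then show ?thesis
    unfolding eventually_sequentially by blast
qed

section \<open>Borel-Cantelli along dyadic times\<close>

lemma exp_neg_mult_div_le:
  fixes m g :: nat and x :: real
  assumes "0 < g" and "0 \<le> x" and "x \<le> 1"
  shows "exp (- x * real (m div g)) \<le> exp 1 * exp (- x * real m / real g)"
proof -
  have "m < (m div g + 1) * g"
    using \<open>0 < g\<close> by (metis div_mult_mod_eq add_mult_distrib mult_1 mod_less_divisor add_less_cancel_left)
  then have "real m < (real (m div g) + 1) * real g"
    by (metis of_nat_1 of_nat_add of_nat_less_iff of_nat_mult)
  then have "real m / real g < real (m div g) + 1"
    using \<open>0 < g\<close> by (simp add: divide_less_eq)
  then have "real m / real g - 1 \<le> real (m div g)"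
    by linarith
  then have "x * (real m / real g - 1) \<le> x * real (m div g)"
    using \<open>0 \<le> x\<close> by (rule mult_left_mono)
  then have "- x * real (m div g) \<le> 1 + - x * real m / real g"
    using \<open>x \<le> 1\<close> by (simp add: algebra_simps)
  then show ?thesis
    by (simp flip: exp_add)
qed

lemma avoidance_bound_nonneg: "0 \<le> C \<Longrightarrow> 0 \<le> avoidance_bound C \<theta> m s L g"
  by (simp add: avoidance_bound_def)

lemma dyadic_avoidance_bound_le:
  fixes K k :: nat
  assumes "0 < K" and "1 \<le> k" and "0 \<le> c" and "0 \<le> C"
    and small: "real (2 ^ k) * dyadic_radius c k \<le> 1"
  shows "avoidance_bound C \<theta> (2 ^ k) (dyadic_radius c k) (2 ^ k div (K * k)) (K * k)
    \<le> exp 1 * exp (- (c * (ln 2)\<^sup>2 / real K)) ^ k + 5 * C * (4 * exp (- \<theta> * real K)) ^ k"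
proof -
  define x where "x = real (2 ^ k) * dyadic_radius c k"
  define L where "L = 2 ^ k div (K * k)"
  have four_pow: "real (2 ^ k) * real (2 ^ k) = (4::real) ^ k"
    by (simp add: power_mult_distrib[symmetric])
  then have "x * real (2 ^ k) = c * (real k * ln 2)\<^sup>2"
    by (simp add: x_def dyadic_radius_def field_simps)
  then have "x * real (2 ^ k) / real (K * k) = c * (ln 2)\<^sup>2 / real K * real k"
    unfolding of_nat_mult using assms(1,2) by (simp add: field_simps power2_eq_square)
  then have "exp (- x * real (2 ^ k) / real (K * k)) = exp (real k * (- (c * (ln 2)\<^sup>2 / real K)))"
    by (simp add: mult.commute)
  moreover have "0 \<le> x"
    using \<open>0 \<le> c\<close> by (simp add: x_def dyadic_radius_nonneg)
  ultimately have term1: "exp (- x * real L) \<le> exp 1 * exp (- (c * (ln 2)\<^sup>2 / real K)) ^ k"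
    using exp_neg_mult_div_le[of "K * k" x "2 ^ k"] small assms(1,2)
    unfolding L_def x_def exp_of_nat_mult by simp
  have "L \<le> 2 ^ k"
    unfolding L_def by (rule div_le_dividend)
  then have "real L \<le> real ((2::nat) ^ k)"
    by (simp only: of_nat_le_iff)
  moreover have "C * (1 + 4 * real (2 ^ k)) * exp (- \<theta> * real (K * k))
      \<le> C * (5 * 2 ^ k) * exp (- \<theta> * real (K * k))"
    using \<open>0 \<le> C\<close> by (intro mult_right_mono mult_left_mono) auto
  ultimately have "real L * (C * (1 + 4 * real (2 ^ k)) * exp (- \<theta> * real (K * k)))
      \<le> 2 ^ k * (C * (5 * 2 ^ k) * exp (- \<theta> * real (K * k)))"
    using \<open>0 \<le> C\<close> by (intro mult_mono) auto
  also have "\<dots> = 5 * C * (4 * exp (- \<theta> * real K)) ^ k"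
  proof -
    have "exp (- \<theta> * real (K * k)) = exp (- \<theta> * real K) ^ k"
      by (simp add: exp_of_nat_mult[symmetric] mult_ac)
    with four_pow show ?thesis
      by (simp add: power_mult_distrib mult_ac)
  qed
  finally have "real L * (C * (1 + 4 * real (2 ^ k)) * exp (- \<theta> * real (K * k)))
      \<le> 5 * C * (4 * exp (- \<theta> * real K)) ^ k" .
  with term1 show ?thesis
    unfolding avoidance_bound_def x_def L_def by (rule add_mono)
qed

lemma summable_dyadic_avoidance_bound:
  fixes K :: nat
  assumes "0 < c" and "0 \<le> C" and K: "ln 4 < \<theta> * real K"
  shows "summable (\<lambda>k. avoidance_bound C \<theta> (2 ^ k) (dyadic_radius c k) (2 ^ k div (K * k)) (K * k))"
proof (rule summable_comparison_test_ev)
  have "0 < K"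
    using K by (cases K) auto
  have "exp (- \<theta> * real K) < exp (- ln 4)"
    using K by simp
  then have "4 * exp (- \<theta> * real K) < 1"
    by (simp add: exp_minus)
  then show "summable (\<lambda>k. exp 1 * exp (- (c * (ln 2)\<^sup>2 / real K)) ^ k
      + 5 * C * (4 * exp (- \<theta> * real K)) ^ k)"
    using \<open>0 < c\<close> \<open>0 < K\<close> by (intro summable_add summable_mult summable_geometric) auto
  have "(\<lambda>k. (2::real) ^ k * dyadic_radius c k) \<longlonglongrightarrow> 0"
    unfolding dyadic_radius_def by real_asymp
  then have "eventually (\<lambda>k. real (2 ^ k) * dyadic_radius c k \<le> 1) sequentially"
    by (rule eventually_mono[OF order_tendstoD(2)[where a = 1]]) auto
  moreover have "eventually (\<lambda>k. k \<ge> 1) sequentially"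
    by (rule eventually_ge_at_top)
  ultimately show "eventually (\<lambda>k.
      norm (avoidance_bound C \<theta> (2 ^ k) (dyadic_radius c k) (2 ^ k div (K * k)) (K * k))
      \<le> exp 1 * exp (- (c * (ln 2)\<^sup>2 / real K)) ^ k + 5 * C * (4 * exp (- \<theta> * real K)) ^ k)
    sequentially"
  proof eventually_elim
    case (elim k)
    then show ?case
      using dyadic_avoidance_bound_le[OF \<open>0 < K\<close> _ _ \<open>0 \<le> C\<close>, of k c \<theta>]
        avoidance_bound_nonneg[OF \<open>0 \<le> C\<close>] \<open>0 < c\<close>
      by simp
  qed
qed

lemma liminf_E_set_measurable:
  assumes "T1 \<in> measurable circle_measure circle_measure"
    and "T2 \<in> measurable circle_measure circle_measure"
  shows "(\<Union>N. \<Inter>n\<in>{N..}. E_set T1 T2 n (r n)) \<in> sets (circle_measure \<Otimes>\<^sub>M circle_measure)"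
  using E_set_measurable[OF assms] by (intro sets.countable_UN sets.countable_INT') auto

lemma measure_pair_le_of_slices:
  assumes M: "prob_space M" and N: "prob_space N" and F: "F \<in> sets (M \<Otimes>\<^sub>M N)"
    and slice: "\<And>y. y \<in> space N \<Longrightarrow> measure M {x. (x, y) \<in> F} \<le> b"
  shows "measure (M \<Otimes>\<^sub>M N) F \<le> b"
proof -
  interpret pair_sigma_finite M N
    unfolding pair_sigma_finite_def by (simp add: M N prob_space_imp_sigma_finite)
  interpret PM: prob_space M by (rule M)
  interpret PN: prob_space N by (rule N)
  interpret PMN: prob_space "M \<Otimes>\<^sub>M N"
    by (rule prob_space_pair[OF M N])
  obtain y where "y \<in> space N"
    using PN.not_empty by blast
  then have "0 \<le> b"
    using slice[of y] measure_nonneg[of M "{x. (x, y) \<in> F}"] by linarith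
  have "emeasure (M \<Otimes>\<^sub>M N) F = (\<integral>\<^sup>+y. emeasure M {x. (x, y) \<in> F} \<partial>N)"
    using emeasure_pair_measure_alt2[OF F] by (simp add: vimage_def)
  also have "\<dots> \<le> (\<integral>\<^sup>+y. ennreal b \<partial>N)"
    using slice by (intro nn_integral_mono)
      (simp add: PM.emeasure_eq_measure ennreal_leI)
  also have "\<dots> = ennreal b"
    by (simp add: PN.emeasure_space_1)
  finally show ?thesis
    using \<open>0 \<le> b\<close> by (simp add: PMN.emeasure_eq_measure)
qed

lemma measure_not_in_dyadic_E_set_le:
  fixes K k :: nat
  assumes mix: "exp_mixing_with C \<theta> T" and "0 \<le> C"
    and T: "T \<in> measurable circle_measure circle_measure"
    and "0 < c" and "0 < K" and "1 \<le> k" and "dyadic_radius c k \<le> 1/2"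
    and gap: "\<And>q. 0 < q \<Longrightarrow> q < 2 ^ k \<Longrightarrow> 2 * dyadic_radius c k \<le> circ_dist (real q * \<alpha>) 0"
  defines "M \<equiv> circle_measure \<Otimes>\<^sub>M circle_measure"
  shows "measure M (space M - E_set T (rotation \<alpha>) (2 ^ k) (dyadic_radius c k))
    \<le> avoidance_bound C \<theta> (2 ^ k) (dyadic_radius c k) (2 ^ k div (K * k)) (K * k)"
  unfolding M_def
proof (rule measure_pair_le_of_slices)
  fix y assume "y \<in> space circle_measure"
  then have "{x. (x, y) \<in> space (circle_measure \<Otimes>\<^sub>M circle_measure)
        - E_set T (rotation \<alpha>) (2 ^ k) (dyadic_radius c k)}
      = {x \<in> circle. (x, y) \<notin> E_set T (rotation \<alpha>) (2 ^ k) (dyadic_radius c k)}"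
    by (auto simp: space_pair_measure)
  also have "measure circle_measure \<dots>
      \<le> avoidance_bound C \<theta> (2 ^ k) (dyadic_radius c k) (2 ^ k div (K * k)) (K * k)"
    using assms \<open>y \<in> space circle_measure\<close>
    by (intro measure_slice_not_in_E_set_le[OF mix \<open>0 \<le> C\<close> T]) (auto simp: dyadic_radius_def)
  finally show "measure circle_measure {x. (x, y) \<in> space (circle_measure \<Otimes>\<^sub>M circle_measure)
        - E_set T (rotation \<alpha>) (2 ^ k) (dyadic_radius c k)}
      \<le> avoidance_bound C \<theta> (2 ^ k) (dyadic_radius c k) (2 ^ k div (K * k)) (K * k)" .
qed (use E_set_measurable[OF T rotation_measurable] prob_space_circle_measure in auto)

lemma AE_eventually_in_dyadic_E_set:
  assumes mix: "exp_mixing_with C \<theta> T" and "0 \<le> C" and "0 < \<theta>"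
    and T: "T \<in> measurable circle_measure circle_measure" and "0 < c"
    and gap: "eventually (\<lambda>k. \<forall>q. 0 < q \<longrightarrow> q < 2 ^ k \<longrightarrow>
                2 * dyadic_radius c k \<le> circ_dist (real q * \<alpha>) 0) sequentially"
  shows "AE z in circle_measure \<Otimes>\<^sub>M circle_measure.
           eventually (\<lambda>k. z \<in> E_set T (rotation \<alpha>) (2 ^ k) (dyadic_radius c k)) sequentially"
proof -
  let ?M = "circle_measure \<Otimes>\<^sub>M circle_measure"
  interpret M: prob_space ?M
    by (intro prob_space_pair prob_space_circle_measure)
  obtain K :: nat where K: "ln 4 < \<theta> * real K"
    using ex_less_of_nat_mult[OF \<open>0 < \<theta>\<close>] by (auto simp: mult.commute)
  then have "0 < K"
    by (cases K) auto
  define E where "E k = E_set T (rotation \<alpha>) (2 ^ k) (dyadic_radius c k)" for k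
  have E_sets: "E k \<in> sets ?M" for k
    unfolding E_def by (rule E_set_measurable[OF T rotation_measurable])
  have "dyadic_radius c \<longlonglongrightarrow> 0"
    unfolding dyadic_radius_def by real_asymp
  then have "eventually (\<lambda>k. dyadic_radius c k \<le> 1/2) sequentially"
    by (rule eventually_mono[OF order_tendstoD(2)[where a = "1/2"]]) auto
  with gap eventually_ge_at_top[of 1]
  have "eventually (\<lambda>k. norm (measure ?M (space ?M - E k))
      \<le> avoidance_bound C \<theta> (2 ^ k) (dyadic_radius c k) (2 ^ k div (K * k)) (K * k)) sequentially"
    unfolding E_def
    by eventually_elim (simp add: measure_not_in_dyadic_E_set_le[OF mix \<open>0 \<le> C\<close> T \<open>0 < c\<close> \<open>0 < K\<close>])
  then have "summable (\<lambda>k. measure ?M (space ?M - E k))"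
    using summable_dyadic_avoidance_bound[OF \<open>0 < c\<close> \<open>0 \<le> C\<close> K]
    by (rule summable_comparison_test_ev)
  with E_sets have "AE z in ?M. eventually (\<lambda>k. z \<in> space ?M - (space ?M - E k)) sequentially"
    by (intro borel_cantelli_AE1) (auto simp: M.emeasure_eq_measure)
  then show ?thesis
    unfolding E_def by (rule AE_mp) (auto elim: eventually_mono)
qed

lemma in_liminf_E_set_of_dyadic:
  assumes "eventually (\<lambda>k. z \<in> E_set T1 T2 (2 ^ k) (s k)) sequentially"
    and "eventually (\<lambda>k. \<forall>n. 2 ^ k \<le> n \<longrightarrow> n < 2 ^ (k + 1) \<longrightarrow> s k \<le> r n) sequentially"
  shows "z \<in> (\<Union>N. \<Inter>n\<in>{N..}. E_set T1 T2 n (r n))"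
proof -
  obtain k0 where k0: "\<And>k. k \<ge> k0 \<Longrightarrow> z \<in> E_set T1 T2 (2 ^ k) (s k)
      \<and> (\<forall>n. 2 ^ k \<le> n \<longrightarrow> n < 2 ^ (k + 1) \<longrightarrow> s k \<le> r n)"
    using eventually_conj[OF assms] unfolding eventually_sequentially by blast
  have "z \<in> E_set T1 T2 n (r n)" if "2 ^ k0 \<le> n" for n
  proof -
    have "1 \<le> n"
      using that by (metis le_trans one_le_power one_le_numeral)
    then obtain k where k: "2 ^ k \<le> n" "n < 2 ^ (k + 1)"
      using ex_power_ivl1[of 2 n] by auto
    then have "k0 \<le> k"
      using that by (metis le_less_trans less_Suc_eq_le nat_power_less_imp_less pos2 Suc_eq_plus1)
    then show ?thesis
      using k0 E_set_mono[of "2 ^ k" n "s k" "r n" T1 T2] k by blast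
  qed
  then show ?thesis by blast
qed

theorem mainTheorem10:
  fixes T1 :: "real \<Rightarrow> real" and \<alpha> \<epsilon> c\<alpha> \<delta> c0 :: real and r :: "nat \<Rightarrow> real"
  assumes T1_mp: "measure_preserving_map circle_measure T1"
    and T1_mix: "exp_mixing_BV_Linf T1"
    and eps_pos: "\<epsilon> > 0" and c\<alpha>_pos: "c\<alpha> > 0"
    and dioph: "\<exists>Q. \<forall>q::nat \<ge> Q. \<forall>p::int.
        \<bar>real q * \<alpha> - real_of_int p\<bar>
          \<ge> c\<alpha> * (ln (real q))\<^sup>2 * (ln (ln (real q))) powr (1 + \<epsilon>) / (real q)\<^sup>2"
    and r_dec: "decseq r" and r_pos: "\<And>n. r n > 0"
    and delta: "0 < \<delta>" "\<delta> < \<epsilon>" and c0_pos: "c0 > 0"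
    and r_lower: "\<exists>N. \<forall>n::nat \<ge> N.
        r n \<ge> c0 * (ln (real n))\<^sup>2 * (ln (ln (real n))) powr (1 + \<delta>) / (real n)\<^sup>2"
  shows "(\<Union>N. \<Inter>n\<in>{N..}. E_set T1 (rotation \<alpha>) n (r n))
           \<in> sets (circle_measure \<Otimes>\<^sub>M circle_measure)
       \<and> measure (circle_measure \<Otimes>\<^sub>M circle_measure)
           (\<Union>N. \<Inter>n\<in>{N..}. E_set T1 (rotation \<alpha>) n (r n)) = 1"
proof -
  let ?M = "circle_measure \<Otimes>\<^sub>M circle_measure"
  define c where "c = min (c0 / 4) (c\<alpha> / 2)"
  have T1: "T1 \<in> measurable circle_measure circle_measure"
    using T1_mp unfolding measure_preserving_map_def by blast
  obtain C \<theta> where "0 < C" "0 < \<theta>" and mix: "exp_mixing_with C \<theta> T1"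
    using T1_mix unfolding exp_mixing_BV_Linf_iff by blast
  have radius: "eventually (\<lambda>k. \<forall>n. 2 ^ k \<le> n \<longrightarrow> n < 2 ^ (k + 1) \<longrightarrow>
      dyadic_radius c k \<le> r n) sequentially"
    using eventually_log_bound_of_loglog_bound[OF r_lower] c0_pos delta
    by (intro eventually_dyadic_radius_le[OF r_dec]) (auto simp: c_def)
  have "eventually (\<lambda>k. \<forall>q. 0 < q \<longrightarrow> q < 2 ^ k \<longrightarrow>
      2 * dyadic_radius c k \<le> circ_dist (real q * \<alpha>) 0) sequentially"
    using eventually_circ_dist_of_dioph[OF dioph] c\<alpha>_pos eps_pos
    by (intro eventually_dyadic_rotation_gap[OF c\<alpha>_pos]) (simp_all add: c_def)
  then have "AE z in ?M. eventually (\<lambda>k. z \<in> E_set T1 (rotation \<alpha>) (2 ^ k) (dyadic_radius c k))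
      sequentially"
    using \<open>0 < C\<close> \<open>0 < \<theta>\<close> c0_pos c\<alpha>_pos
    by (intro AE_eventually_in_dyadic_E_set[OF mix _ _ T1]) (simp_all add: c_def)
  then have "AE z in ?M. z \<in> (\<Union>N. \<Inter>n\<in>{N..}. E_set T1 (rotation \<alpha>) n (r n))"
    by (rule eventually_mono) (rule in_liminf_E_set_of_dyadic[OF _ radius])
  then show ?thesis
    using liminf_E_set_measurable[OF T1 rotation_measurable]
      prob_space.prob_eq_1[OF prob_space_pair[OF prob_space_circle_measure prob_space_circle_measure]]
    by blast
qed

end
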